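(* Let $\mathcal{E}$ be a set, let $d\ge 1$, and let $x\mapsto \vec{x}\in\mathbb{R}^d$ be an arbitrary assignment of a vector to each element $x\in\mathcal{E}$. Fix vectors $w_1,b_1\in\mathbb{R}^d$ and define $g:\mathbb{R}^d\to\mathbb{R}^d$ by $g(\vec{v})=\mathrm{ReLU}(w_1\otimes \vec{v}+b_1)$, where $\otimes$ is component-wise multiplication and $\mathrm{ReLU}(u)=\max(0,u)$ is applied component-wise, and define $f(\vec{v})=\vec{v}+g(\vec{v})$. Define a binary relation $\prec$ on $\mathcal{E}$ by $$x\prec y \iff f(\vec{x})_i<\vec{y}_i \text{ for all } i=1,\dots,d.$$ Then $\prec$ is transitive: for any three distinct $x,y,z\in\mathcal{E}$, if $x\prec y$ and $y\prec z$ then $x\prec z$.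
   Context: $\vec{v}_i$ denotes the $i$-th component of $\vec{v}\in\mathbb{R}^d$. *)

theory Defs
  imports "HOL-Analysis.Analysis"
begin

definition relu :: "real \<Rightarrow> real" where
  "relu u = max 0 u"

definition gmap :: "real ^ 'd \<Rightarrow> real ^ 'd \<Rightarrow> real ^ 'd \<Rightarrow> real ^ 'd" where
  "gmap w1 b1 v = (\<chi> i. relu (w1 $ i * v $ i + b1 $ i))"

definition fmap :: "real ^ 'd \<Rightarrow> real ^ 'd \<Rightarrow> real ^ 'd \<Rightarrow> real ^ 'd" where
  "fmap w1 b1 v = v + gmap w1 b1 v"

definition prec :: "('e \<Rightarrow> real ^ 'd) \<Rightarrow> real ^ 'd \<Rightarrow> real ^ 'd \<Rightarrow> 'e \<Rightarrow> 'e \<Rightarrow> bool" where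
  "prec emb w1 b1 x y \<longleftrightarrow> (\<forall>i. fmap w1 b1 (emb x) $ i < emb y $ i)"

end

theory Submission
  imports Defs
begin

lemma relu_nonneg: "0 \<le> relu u"
  unfolding relu_def by simp

lemma gmap_nonneg: "0 \<le> gmap w1 b1 v $ i"
  unfolding gmap_def by (simp add: relu_nonneg)

lemma fmap_ge: "v $ i \<le> fmap w1 b1 v $ i"
  unfolding fmap_def by (simp add: gmap_nonneg)

lemma prec_trans:
  assumes "prec emb w1 b1 x y" and "prec emb w1 b1 y z"
  shows "prec emb w1 b1 x z"
  unfolding prec_def
proof
  fix i
  have "fmap w1 b1 (emb x) $ i < emb y $ i" using assms(1) unfolding prec_def by blast
  also have "\<dots> \<le> fmap w1 b1 (emb y) $ i" by (rule fmap_ge)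
  also have "\<dots> < emb z $ i" using assms(2) unfolding prec_def by blast
  finally show "fmap w1 b1 (emb x) $ i < emb z $ i" .
qed

theorem theorem2:
  fixes E :: "'e set" and emb :: "'e \<Rightarrow> real ^ 'd" and w1 b1 :: "real ^ 'd"
  assumes "x \<in> E" and "y \<in> E" and "z \<in> E"
    and "x \<noteq> y" and "y \<noteq> z" and "x \<noteq> z"
    and "prec emb w1 b1 x y" and "prec emb w1 b1 y z"
  shows "prec emb w1 b1 x z"
  using assms(7,8) by (rule prec_trans)

end
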